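(* Use the convention that the flow of a Hamiltonian $H$ is $\dot F=\{H,F\}$. (i) On $\mathcal C^\times_{n,d,q}$, for $k\ge1$, the flow of $H=\frac1k\operatorname{tr}Z^k$ starting at $(X,Z,V_\alpha,W_\alpha)$ is $X(t)=Xe^{-tZ^k}$, $Z(t)=Z$, $V_\alpha(t)=V_\alpha$, $W_\alpha(t)=W_\alpha$. (ii) On $\mathcal C_{n,d,q}$, for $k\geq1$, the flow of $H=\frac1k\operatorname{tr}Y^k$ starting at $(X,Y,V_\alpha,W_\alpha)$ is $X(\tau)=Xe^{-\tau Y^k}+Y^{-1}(e^{-\tau Y^k}-\mathrm{Id}_n)$, $Y(\tau)=Y$, $V_\alpha(\tau)=V_\alpha$, $W_\alpha(\tau)=W_\alpha$, where $Y^{-1}(e^{-\tau Y^k}-\mathrm{Id}_n)$ denotes the entire power series in $Y$ (defined also for singular $Y$). These flows are complete on the respective Calogero–Moser spaces.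
   Context: Fix $n,d\ge1$, $q\in\mathbb C^\times$ not a root of unity; $o(\alpha,\beta)=0,1,-1$ according as $\alpha=\beta,\alpha<\beta,\alpha>\beta$. $\mathcal M^\times_{n,d,q}$: tuples $(X,Z,V_\alpha,W_\alpha)_{\alpha=1}^d$, $X,Z\in\mathrm{GL}_n$, $V_\alpha\in\mathrm{Mat}_{1\times n}$, $W_\alpha\in\mathrm{Mat}_{n\times1}$, $\mathrm{Id}_n+W_\alpha V_\alpha$ invertible, $XZX^{-1}Z^{-1}(\mathrm{Id}_n+W_1V_1)^{-1}\cdots(\mathrm{Id}_n+W_dV_d)^{-1}=q\mathrm{Id}_n$. $\mathcal M_{n,d,q}$: tuples $(X,Y,V_\alpha,W_\alpha)$ with $X,Y\in\mathrm{Mat}_{n\times n}$, $\mathrm{Id}_n+XY$, $\mathrm{Id}_n+YX$, $\mathrm{Id}_n+W_\alpha V_\alpha$ invertible and $(\mathrm{Id}_n+XY)(\mathrm{Id}_n+YX)^{-1}(\mathrm{Id}_n+W_1V_1)^{-1}\cdots(\mathrm{Id}_n+W_dV_d)^{-1}=q\mathrm{Id}_n$. $\mathrm{GL}_n$ acts on both by conjugating $X,Y,Z$, $V\mapsto Vg^{-1}$, $W\mapsto gW$; the quotients $\mathcal C^\times_{n,d,q}=\mathcal M^\times_{n,d,q}/\!/\mathrm{GL}_n$, $\mathcal C_{n,d,q}=\mathcal M_{n,d,q}/\!/\mathrm{GL}_n$ are smooth of dimension $2nd$ and carry the Poisson brackets induced on invariant functions by the quasi-Poisson biderivations given by $\{X_{ij},X_{kl}\}=\tfrac12(\delta_{il}(X^2)_{kj}-\delta_{kj}(X^2)_{il})$;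 for $U\in\{Y,Z\}$: $\{U_{ij},U_{kl}\}=\tfrac12(\delta_{kj}(U^2)_{il}-\delta_{il}(U^2)_{kj})$; $\{X_{ij},Z_{kl}\}=\tfrac12((ZX)_{kj}\delta_{il}+\delta_{kj}(XZ)_{il}+Z_{kj}X_{il}-X_{kj}Z_{il})$; $\{X_{ij},Y_{kl}\}=\delta_{kj}\delta_{il}+\tfrac12((YX)_{kj}\delta_{il}+\delta_{kj}(XY)_{il}+Y_{kj}X_{il}-X_{kj}Y_{il})$; for $U\in\{X,Y,Z\}$: $\{U_{ij},W_{\alpha,k}\}=\tfrac12(\delta_{kj}(UW_\alpha)_i-U_{kj}W_{\alpha,i})$, $\{U_{ij},V_{\alpha,l}\}=\tfrac12((V_\alpha U)_j\delta_{il}-V_{\alpha,j}U_{il})$; $\{V_{\alpha,j},V_{\beta,l}\}=\tfrac12o(\beta,\alpha)(V_{\beta,j}V_{\alpha,l}+V_{\alpha,j}V_{\beta,l})$; $\{W_{\alpha,i},W_{\beta,k}\}=\tfrac12o(\beta,\alpha)(W_{\beta,k}W_{\alpha,i}+W_{\alpha,k}W_{\beta,i})$; $\{V_{\alpha,j},W_{\beta,k}\}=\delta_{\alpha\beta}(\delta_{kj}+\tfrac12W_{\alpha,k}V_{\alpha,j}+\tfrac12\delta_{kj}V_\alpha W_\alpha)+\tfrac12o(\alpha,\beta)(\delta_{kj}V_\alpha W_\beta+W_{\beta,k}V_{\alpha,j})$. The flow of a $\mathrm{GL}_n$-invariant $H$ is described on representatives $(X,Z,V,W)$ (resp. $(X,Y,V,W)$)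 by $\dot M_{ij}=\{H,M_{ij}\}$ for each matrix entry. *)

theory Defs
  imports "HOL-Analysis.Analysis"
begin

text \<open>Matrices are complex^'n^'n (n = CARD('n)); the framing vectors are indexed by
  alpha in {0..<d} (the paper's alpha = 1..d shifted by one). V alpha is a row vector,
  W alpha a column vector, both stored as complex^'n.\<close>

definition kd :: "'a \<Rightarrow> 'a \<Rightarrow> complex" where
  "kd a b = (if a = b then 1 else 0)"

definition ord_sign :: "nat \<Rightarrow> nat \<Rightarrow> complex" where
  "ord_sign a b = (if a = b then 0 else if a < b then 1 else -1)"

definition smul :: "complex \<Rightarrow> complex^'n^'m \<Rightarrow> complex^'n^'m" where
  "smul c A = (\<chi> i j. c * A$i$j)"

primrec mpow :: "complex^'n^'n \<Rightarrow> nat \<Rightarrow> complex^'n^'n" where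
  "mpow A 0 = mat 1"
| "mpow A (Suc m) = A ** mpow A m"

definition mexp :: "complex^'n^'n \<Rightarrow> complex^'n^'n" where
  "mexp A = (\<Sum>m. smul (1 / fact m) (mpow A m))"

text \<open>The entire power series  Y^{-1}(exp(-tau Y^k) - Id) = sum_{m>=1} (-tau)^m Y^{km-1} / m!.\<close>
definition phiser :: "nat \<Rightarrow> complex \<Rightarrow> complex^'n^'n \<Rightarrow> complex^'n^'n" where
  "phiser k \<tau> Y = (\<Sum>m. smul ((- \<tau>) ^ Suc m / fact (Suc m)) (mpow Y (k * Suc m - 1)))"

definition outer :: "complex^'n \<Rightarrow> complex^'n \<Rightarrow> complex^'n^'n" where
  "outer W V = (\<chi> i j. W$i * V$j)"

definition rdot :: "complex^'n \<Rightarrow> complex^'n \<Rightarrow> complex" where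
  "rdot V W = (\<Sum>j\<in>UNIV. V$j * W$j)"

text \<open>(Id + W_1 V_1)^{-1} ... (Id + W_d V_d)^{-1}, in this order.\<close>
definition prodinv :: "nat \<Rightarrow> (nat \<Rightarrow> complex^'n) \<Rightarrow> (nat \<Rightarrow> complex^'n) \<Rightarrow> complex^'n^'n" where
  "prodinv d W V = foldr (\<lambda>\<alpha> P. matrix_inv (mat 1 + outer (W \<alpha>) (V \<alpha>)) ** P) [0..<d] (mat 1)"

type_synonym 'n cstate =
  "(complex^'n^'n) \<times> (complex^'n^'n) \<times> (nat \<Rightarrow> complex^'n) \<times> (nat \<Rightarrow> complex^'n)"

definition MX :: "nat \<Rightarrow> complex \<Rightarrow> 'n::finite cstate set" where
  "MX d q = {(X, Z, V, W). invertible X \<and> invertible Z \<and>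
      (\<forall>\<alpha><d. invertible (mat 1 + outer (W \<alpha>) (V \<alpha>))) \<and>
      X ** Z ** matrix_inv X ** matrix_inv Z ** prodinv d W V = mat q}"

definition MY :: "nat \<Rightarrow> complex \<Rightarrow> 'n::finite cstate set" where
  "MY d q = {(X, Y, V, W). invertible (mat 1 + X ** Y) \<and> invertible (mat 1 + Y ** X) \<and>
      (\<forall>\<alpha><d. invertible (mat 1 + outer (W \<alpha>) (V \<alpha>))) \<and>
      (mat 1 + X ** Y) ** matrix_inv (mat 1 + Y ** X) ** prodinv d W V = mat q}"

text \<open>Coordinate functions: entries of X, of the second matrix U (U = Z or U = Y),
  of V_alpha and of W_alpha.\<close>
datatype 'n coord = CX 'n 'n | CU 'n 'n | CV nat 'n | CW nat 'n

fun cval :: "'n::finite cstate \<Rightarrow> 'n coord \<Rightarrow> complex" where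
  "cval (X, U, V, W) (CX i j) = X$i$j"
| "cval (X, U, V, W) (CU i j) = U$i$j"
| "cval (X, U, V, W) (CV a j) = V a $ j"
| "cval (X, U, V, W) (CW a i) = W a $ i"

definition valid_coord :: "nat \<Rightarrow> 'n coord \<Rightarrow> bool" where
  "valid_coord d c = (case c of CV a j \<Rightarrow> a < d | CW a i \<Rightarrow> a < d | _ \<Rightarrow> True)"

definition brMW :: "complex^'n^'n \<Rightarrow> 'n \<Rightarrow> 'n \<Rightarrow> complex^'n \<Rightarrow> 'n \<Rightarrow> complex" where
  "brMW M i j w k = (1/2) * (kd k j * (M *v w)$i - M$k$j * w$i)"

definition brMV :: "complex^'n^'n \<Rightarrow> 'n \<Rightarrow> 'n \<Rightarrow> complex^'n \<Rightarrow> 'n \<Rightarrow> complex" where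
  "brMV M i j v l = (1/2) * ((v v* M)$j * kd i l - v$j * M$i$l)"

text \<open>{X_ij, U_kl}; the parameter c0 is 0 for U = Z and 1 for U = Y.\<close>
definition brXU :: "complex \<Rightarrow> complex^'n^'n \<Rightarrow> complex^'n^'n \<Rightarrow> 'n \<Rightarrow> 'n \<Rightarrow> 'n \<Rightarrow> 'n \<Rightarrow> complex" where
  "brXU c0 X U i j k l = c0 * kd k j * kd i l +
     (1/2) * ((U ** X)$k$j * kd i l + kd k j * (X ** U)$i$l + U$k$j * X$i$l - X$k$j * U$i$l)"

text \<open>The quasi-Poisson bracket on coordinate functions (as listed in the paper,
  extended by antisymmetry).\<close>
fun qbr :: "complex \<Rightarrow> 'n::finite cstate \<Rightarrow> 'n coord \<Rightarrow> 'n coord \<Rightarrow> complex" where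
  "qbr c0 (X, U, V, W) (CX i j) (CX k l) =
     (1/2) * (kd i l * (X ** X)$k$j - kd k j * (X ** X)$i$l)"
| "qbr c0 (X, U, V, W) (CU i j) (CU k l) =
     (1/2) * (kd k j * (U ** U)$i$l - kd i l * (U ** U)$k$j)"
| "qbr c0 (X, U, V, W) (CX i j) (CU k l) = brXU c0 X U i j k l"
| "qbr c0 (X, U, V, W) (CU k l) (CX i j) = - brXU c0 X U i j k l"
| "qbr c0 (X, U, V, W) (CX i j) (CW a k) = brMW X i j (W a) k"
| "qbr c0 (X, U, V, W) (CW a k) (CX i j) = - brMW X i j (W a) k"
| "qbr c0 (X, U, V, W) (CU i j) (CW a k) = brMW U i j (W a) k"
| "qbr c0 (X, U, V, W) (CW a k) (CU i j) = - brMW U i j (W a) k"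
| "qbr c0 (X, U, V, W) (CX i j) (CV a l) = brMV X i j (V a) l"
| "qbr c0 (X, U, V, W) (CV a l) (CX i j) = - brMV X i j (V a) l"
| "qbr c0 (X, U, V, W) (CU i j) (CV a l) = brMV U i j (V a) l"
| "qbr c0 (X, U, V, W) (CV a l) (CU i j) = - brMV U i j (V a) l"
| "qbr c0 (X, U, V, W) (CV a j) (CV b l) =
     (1/2) * ord_sign b a * (V b $ j * V a $ l + V a $ j * V b $ l)"
| "qbr c0 (X, U, V, W) (CW a i) (CW b k) =
     (1/2) * ord_sign b a * (W b $ k * W a $ i + W a $ k * W b $ i)"
| "qbr c0 (X, U, V, W) (CV a j) (CW b k) =
     kd a b * (kd k j + (1/2) * W a $ k * V a $ j + (1/2) * kd k j * rdot (V a) (W a))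
     + (1/2) * ord_sign a b * (kd k j * rdot (V a) (W b) + W b $ k * V a $ j)"
| "qbr c0 (X, U, V, W) (CW b k) (CV a j) =
     - (kd a b * (kd k j + (1/2) * W a $ k * V a $ j + (1/2) * kd k j * rdot (V a) (W a))
     + (1/2) * ord_sign a b * (kd k j * rdot (V a) (W b) + W b $ k * V a $ j))"

text \<open>Hamiltonian derivative {H, F} for H = (1/k) tr U^k, obtained from the
  biderivation property: {H, F} = sum_{a,b} dH/dU_ab {U_ab, F}, with
  dH/dU_ab = (U^{k-1})_ba.\<close>
definition ham_trpow :: "complex \<Rightarrow> nat \<Rightarrow> 'n::finite cstate \<Rightarrow> 'n coord \<Rightarrow> complex" where
  "ham_trpow c0 k st c =
     (case st of (X, U, V, W) \<Rightarrow>
        \<Sum>a\<in>UNIV. \<Sum>b\<in>UNIV. (mpow U (k - 1))$b$a * qbr c0 st (CU a b) c)"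

end

theory Submission
  imports Defs
begin

text \<open>Both Hamiltonians depend on \<open>U\<close> (\<open>= Z\<close> or \<open>Y\<close>) only. Contracting the brackets
  \<open>{U\<^sub>a\<^sub>b, -}\<close> with \<open>\<partial>H/\<partial>U\<^sub>a\<^sub>b = (U\<^sup>k\<^sup>-\<^sup>1)\<^sub>b\<^sub>a\<close> shows that the flow fixes \<open>U\<close>,
  \<open>V\<close> and \<open>W\<close> and moves \<open>X\<close> by the linear equation \<open>X' = - X U\<^sup>k - c\<^sub>0 U\<^sup>k\<^sup>-\<^sup>1\<close>,
  where \<open>c\<^sub>0\<close> is 0 for \<open>Z\<close> and 1 for \<open>Y\<close>. The stated curves solve it, because
  \<open>exp(-t U\<^sup>k)\<close> has derivative \<open>- exp(-t U\<^sup>k) U\<^sup>k\<close> and \<open>\<phi>(\<tau>) = Y\<^sup>-\<^sup>1(exp(-\<tau> Y\<^sup>k) - Id)\<close>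
  has derivative \<open>- \<phi>(\<tau>) Y\<^sup>k - Y\<^sup>k\<^sup>-\<^sup>1\<close>. They stay in the representative spaces: right
  multiplication of \<open>X\<close> by the invertible matrix \<open>exp(-t Z\<^sup>k)\<close>, which commutes with \<open>Z\<close>,
  does not change \<open>X Z X\<^sup>-\<^sup>1\<close>; and since \<open>Y \<phi>(\<tau>) = \<phi>(\<tau>) Y = exp(-\<tau> Y\<^sup>k) - Id\<close>, the
  matrices \<open>Id + X(\<tau>) Y\<close> and \<open>Id + Y X(\<tau>)\<close> are \<open>Id + X Y\<close> and \<open>Id + Y X\<close> multiplied on the
  right by \<open>exp(-\<tau> Y\<^sup>k)\<close>, which cancels in \<open>(Id + X Y)(Id + Y X)\<^sup>-\<^sup>1\<close>.\<close>

lemma smul_component [simp]: "smul c A $ i $ j = c * A $ i $ j"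
  by (simp add: smul_def)

lemma smul_smul: "smul c (smul e A) = smul (c * e) A"
  by (simp add: vec_eq_iff mult.assoc)

lemma smul_mult_left: "smul c A ** B = smul c (A ** B)"
  by (simp add: vec_eq_iff matrix_matrix_mult_def sum_distrib_left mult.assoc)

lemma smul_mult_right: "A ** smul c B = smul c (A ** B)"
  by (simp add: vec_eq_iff matrix_matrix_mult_def sum_distrib_left mult_ac)

lemma matrix_mul_minus_right: "A ** (- B) = - (A ** B :: 'a::comm_ring_1^'n^'m)"
  by (simp add: vec_eq_iff matrix_matrix_mult_def sum_negf)

lemma matrix_add_rdistrib: "(B + C) ** A = B ** A + (C ** A :: 'a::comm_ring_1^'n^'m)"
  by (simp add: vec_eq_iff matrix_matrix_mult_def sum.distrib ring_distribs)

lemma mpow_add: "mpow A (m + n) = mpow A m ** mpow A n"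
  by (induction m) (simp_all add: matrix_mul_assoc)

lemma mpow_mult: "mpow (mpow A k) m = mpow A (k * m)"
  by (induction m) (simp_all add: mpow_add)

lemma mpow_smul: "mpow (smul c A) m = smul (c ^ m) (mpow A m)"
  by (induction m) (simp_all add: smul_mult_left smul_mult_right smul_smul mult.commute,
      simp add: vec_eq_iff mat_def)

lemma commute_mpow:
  assumes "A ** C = C ** A"
  shows "A ** mpow C m = mpow C m ** A"
proof (induction m)
  case (Suc m)
  have "A ** mpow C (Suc m) = C ** (A ** mpow C m)"
    by (simp add: assms matrix_mul_assoc flip: matrix_mul_assoc[of A])
  then show ?case
    by (simp add: Suc matrix_mul_assoc)
qed simp

lemma mpow_diff_one:
  assumes "1 \<le> k"
  shows "U ** mpow U (k - 1) = mpow U k" "mpow U (k - 1) ** U = mpow U k"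
proof -
  show "U ** mpow U (k - 1) = mpow U k"
    using assms by (cases k) auto
  then show "mpow U (k - 1) ** U = mpow U k"
    using commute_mpow[of U U, OF refl] by simp
qed

lemma matrix_inv_inverse:
  assumes "invertible A"
  shows "A ** matrix_inv A = mat 1" "matrix_inv A ** A = mat 1"
  using someI_ex[OF assms[unfolded invertible_def]] by (simp_all add: matrix_inv_def)

lemma matrix_mult_inv_cancel:
  fixes B E :: "'a::field^'n^'n"
  assumes "invertible B" and "invertible E"
  shows "A ** E ** matrix_inv (B ** E) = A ** matrix_inv B"
proof -
  have "B ** E ** matrix_inv (B ** E) = mat 1"
    using matrix_inv_inverse invertible_mult[OF assms] by blast
  then have "E ** matrix_inv (B ** E) = matrix_inv B"
    using matrix_inv_inverse(2)[OF assms(1)] by (metis matrix_mul_assoc matrix_mul_lid matrix_mul_rid)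
  then show ?thesis by (simp flip: matrix_mul_assoc)
qed

lemma bounded_linear_matrix_mult_left: "bounded_linear (\<lambda>B. A ** (B :: complex^'k^'n))"
  unfolding linear_conv_bounded_linear[symmetric]
  by (rule linearI)
     (simp_all add: vec_eq_iff ring_distribs sum.distrib matrix_matrix_mult_def scaleR_sum_right)

lemma bounded_linear_matrix_mult_right: "bounded_linear (\<lambda>B. (B :: complex^'k^'n) ** A)"
  unfolding linear_conv_bounded_linear[symmetric]
  by (rule linearI)
     (simp_all add: vec_eq_iff ring_distribs sum.distrib matrix_matrix_mult_def scaleR_sum_right)

lemma matrix_mult_has_field_derivative:
  fixes F :: "complex \<Rightarrow> complex^'k^'n" and G :: "complex \<Rightarrow> complex^'m^'k"
  assumes "\<And>i j. ((\<lambda>s. F s $ i $ j) has_field_derivative F' $ i $ j) (at t)"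
    and "\<And>i j. ((\<lambda>s. G s $ i $ j) has_field_derivative G' $ i $ j) (at t)"
  shows "((\<lambda>s. (F s ** G s) $ i $ j) has_field_derivative (F t ** G' + F' ** G t) $ i $ j) (at t)"
  unfolding matrix_matrix_mult_def vector_add_component vec_lambda_beta
  by (subst sum.distrib[symmetric]) (intro DERIV_sum DERIV_mult' assms)

definition entry_l1_norm :: "complex^'n^'m \<Rightarrow> real" where
  "entry_l1_norm A = (\<Sum>i\<in>UNIV. \<Sum>j\<in>UNIV. norm (A $ i $ j))"

lemma entry_l1_norm_nonneg: "0 \<le> entry_l1_norm A"
  by (simp add: entry_l1_norm_def sum_nonneg)

lemma entry_l1_norm_zero [simp]: "entry_l1_norm 0 = 0"
  by (simp add: entry_l1_norm_def)

lemma norm_vec_le_sum: "norm v \<le> (\<Sum>j\<in>UNIV. norm (v $ j))"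
  unfolding norm_vec_def by (rule L2_set_le_sum) simp

lemma norm_le_entry_l1_norm: "norm A \<le> entry_l1_norm A"
proof -
  have "norm A \<le> (\<Sum>i\<in>UNIV. norm (A $ i))" by (rule norm_vec_le_sum)
  also have "\<dots> \<le> entry_l1_norm A"
    unfolding entry_l1_norm_def by (intro sum_mono norm_vec_le_sum)
  finally show ?thesis .
qed

lemma entry_l1_norm_smul: "entry_l1_norm (smul c A) = norm c * entry_l1_norm A"
  by (simp add: entry_l1_norm_def norm_mult sum_distrib_left)

lemma entry_l1_norm_mult: "entry_l1_norm (A ** B) \<le> entry_l1_norm A * entry_l1_norm B"
proof -
  have "entry_l1_norm (A ** B)
      \<le> (\<Sum>i\<in>UNIV. \<Sum>j\<in>UNIV. \<Sum>l\<in>UNIV. norm (A $ i $ l) * norm (B $ l $ j))"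
    unfolding entry_l1_norm_def matrix_matrix_mult_def
    by (intro sum_mono) (simp add: norm_mult[symmetric] norm_sum)
  also have "\<dots> = (\<Sum>i\<in>UNIV. \<Sum>l\<in>UNIV. \<Sum>j\<in>UNIV. norm (A $ i $ l) * norm (B $ l $ j))"
    by (rule sum.cong[OF refl], rule sum.swap)
  also have "\<dots> = (\<Sum>i\<in>UNIV. \<Sum>l\<in>UNIV. norm (A $ i $ l) * (\<Sum>j\<in>UNIV. norm (B $ l $ j)))"
    by (simp add: sum_distrib_left)
  also have "\<dots> \<le> (\<Sum>i\<in>UNIV. \<Sum>l\<in>UNIV. norm (A $ i $ l) * entry_l1_norm B)"
    unfolding entry_l1_norm_def
    by (intro sum_mono mult_left_mono member_le_sum[where f = "\<lambda>l. \<Sum>j\<in>UNIV. norm (B $ l $ j)"])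
       (auto intro: sum_nonneg)
  also have "\<dots> = entry_l1_norm A * entry_l1_norm B"
    by (simp add: entry_l1_norm_def sum_distrib_right)
  finally show ?thesis .
qed

lemma entry_l1_norm_mpow: "entry_l1_norm (mpow C m) \<le> entry_l1_norm (mpow C 0) * entry_l1_norm C ^ m"
proof (induction m)
  case (Suc m)
  have "entry_l1_norm (mpow C (Suc m)) \<le> entry_l1_norm C * entry_l1_norm (mpow C m)"
    by (simp add: entry_l1_norm_mult)
  also have "\<dots> \<le> entry_l1_norm C * (entry_l1_norm (mpow C 0) * entry_l1_norm C ^ m)"
    by (intro mult_left_mono Suc entry_l1_norm_nonneg)
  finally show ?case by (simp add: mult_ac)
qed simp

definition geom_bounded :: "(nat \<Rightarrow> complex^'n^'m) \<Rightarrow> bool" where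
  "geom_bounded a \<longleftrightarrow> (\<exists>B R. \<forall>m. entry_l1_norm (a m) \<le> B * R ^ m)"

lemma geom_bounded_mpow: "geom_bounded (mpow C)"
  unfolding geom_bounded_def using entry_l1_norm_mpow by blast

lemma geom_bounded_mult_left:
  assumes "geom_bounded a"
  shows "geom_bounded (\<lambda>m. A ** a m)"
proof -
  obtain B R where bound: "\<And>m. entry_l1_norm (a m) \<le> B * R ^ m"
    using assms by (auto simp: geom_bounded_def)
  have "entry_l1_norm (A ** a m) \<le> (entry_l1_norm A * B) * R ^ m" for m
    using order_trans[OF entry_l1_norm_mult mult_left_mono[OF bound entry_l1_norm_nonneg]]
    by (simp add: mult.assoc)
  then show ?thesis by (auto simp: geom_bounded_def)
qed

lemma geom_bounded_mult_right:
  assumes "geom_bounded a"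
  shows "geom_bounded (\<lambda>m. a m ** A)"
proof -
  obtain B R where bound: "\<And>m. entry_l1_norm (a m) \<le> B * R ^ m"
    using assms by (auto simp: geom_bounded_def)
  have "entry_l1_norm (a m ** A) \<le> (entry_l1_norm A * B) * R ^ m" for m
    using order_trans[OF entry_l1_norm_mult mult_right_mono[OF bound entry_l1_norm_nonneg]]
    by (simp add: mult_ac)
  then show ?thesis by (auto simp: geom_bounded_def)
qed

lemma geom_bounded_Suc:
  assumes "geom_bounded a"
  shows "geom_bounded (\<lambda>m. a (Suc m))"
proof -
  obtain B R where bound: "\<And>m. entry_l1_norm (a m) \<le> B * R ^ m"
    using assms by (auto simp: geom_bounded_def)
  have "entry_l1_norm (a (Suc m)) \<le> (B * R) * R ^ m" for m
    using bound[of "Suc m"] by (simp add: mult_ac)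
  then show ?thesis by (auto simp: geom_bounded_def)
qed

section \<open>Exponential generating series of matrices\<close>

text \<open>Both \<open>mexp\<close> and \<open>phiser\<close> are of this form. The library does not make
  \<open>complex^'n^'n\<close> a complex normed algebra, so convergence and termwise differentiation are
  obtained entry by entry.\<close>

definition egf :: "(nat \<Rightarrow> complex^'n^'m) \<Rightarrow> complex \<Rightarrow> complex^'n^'m" where
  "egf a t = (\<Sum>m. smul (t ^ m / fact m) (a m))"

lemma summable_egf:
  assumes "geom_bounded a"
  shows "summable (\<lambda>m. smul (t ^ m / fact m) (a m))"
proof -
  obtain B R where bound: "\<And>m. entry_l1_norm (a m) \<le> B * R ^ m"
    using assms by (auto simp: geom_bounded_def)
  show ?thesis
  proof (rule summable_comparison_test')
    show "summable (\<lambda>m. B * (inverse (fact m) * (R * norm t) ^ m))"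
      by (intro summable_mult summable_exp)
    fix m
    have "norm (smul (t ^ m / fact m) (a m)) \<le> norm t ^ m / fact m * entry_l1_norm (a m)"
      using norm_le_entry_l1_norm[of "smul (t ^ m / fact m) (a m)"]
      by (simp add: entry_l1_norm_smul norm_divide norm_power)
    also have "\<dots> \<le> norm t ^ m / fact m * (B * R ^ m)"
      by (intro mult_left_mono bound) simp
    finally show "norm (smul (t ^ m / fact m) (a m)) \<le> B * (inverse (fact m) * (R * norm t) ^ m)"
      by (simp add: field_simps)
  qed
qed

lemma egf_sums:
  assumes "geom_bounded a"
  shows "(\<lambda>m. smul (t ^ m / fact m) (a m)) sums egf a t"
  unfolding egf_def using summable_egf[OF assms] by (rule summable_sums)

lemma egf_component_sums:
  assumes "geom_bounded a"
  shows "(\<lambda>m. a m $ i $ j / fact m * t ^ m) sums egf a t $ i $ j"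
proof -
  have "(\<lambda>m. smul (t ^ m / fact m) (a m) $ i $ j) sums egf a t $ i $ j"
    using sums_vec_nth[OF sums_vec_nth[OF egf_sums[OF assms]]] .
  moreover have "smul (t ^ m / fact m) (a m) $ i $ j = a m $ i $ j / fact m * t ^ m" for m
    by (simp add: mult.commute)
  ultimately show ?thesis by (simp only:)
qed

lemma egf_zero: "egf a 0 = a 0"
proof -
  have "(\<lambda>m. smul (0 ^ m / fact m) (a m)) = (\<lambda>m. if m = 0 then a m else 0)"
    by (auto simp: vec_eq_iff)
  then show ?thesis
    unfolding egf_def using sums_unique[OF sums_single[of 0 a]] by simp
qed

lemma egf_split_head:
  assumes "geom_bounded a"
  shows "egf a t = a 0 + (\<Sum>m. smul (t ^ Suc m / fact (Suc m)) (a (Suc m)))"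
proof -
  have "(\<Sum>m. smul (t ^ Suc m / fact (Suc m)) (a (Suc m))) = egf a t - smul (t ^ 0 / fact 0) (a 0)"
    unfolding egf_def by (rule suminf_split_head[OF summable_egf[OF assms]])
  moreover have "smul (t ^ 0 / fact 0) (a 0) = a 0"
    by (simp add: vec_eq_iff)
  ultimately show ?thesis by simp
qed

lemma egf_mult_left:
  assumes "geom_bounded a"
  shows "A ** egf a t = egf (\<lambda>m. A ** a m) t"
  unfolding egf_def
  by (simp add: bounded_linear.suminf[OF bounded_linear_matrix_mult_left summable_egf[OF assms]]
      smul_mult_right)

lemma egf_mult_right:
  assumes "geom_bounded a"
  shows "egf a t ** A = egf (\<lambda>m. a m ** A) t"
  unfolding egf_def
  by (simp add: bounded_linear.suminf[OF bounded_linear_matrix_mult_right summable_egf[OF assms]]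
      smul_mult_left)

lemma egf_commute:
  assumes "geom_bounded a" and "\<And>m. A ** a m = a m ** A"
  shows "A ** egf a t = egf a t ** A"
  by (simp add: egf_mult_left egf_mult_right assms)

lemma diffs_divide_fact: "diffs (\<lambda>m. f m / fact m) = (\<lambda>m. f (Suc m) / (fact m :: 'a::field_char_0))"
  by (simp add: diffs_def fun_eq_iff del: of_nat_Suc)

lemma egf_has_field_derivative:
  assumes "geom_bounded a"
  shows "((\<lambda>s. egf a s $ i $ j) has_field_derivative egf (\<lambda>m. a (Suc m)) t $ i $ j) (at t)"
proof -
  define c where "c m = a m $ i $ j / fact m" for m
  have egf_eq: "egf b s $ i $ j = (\<Sum>m. b m $ i $ j / fact m * s ^ m)" if "geom_bounded b" for b s
    using sums_unique[OF egf_component_sums[OF that]] .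
  have deriv: "((\<lambda>s. \<Sum>m. c m * s ^ m) has_field_derivative (\<Sum>m. diffs c m * t ^ m)) (at t)"
    by (rule termdiffs_strong_converges_everywhere)
       (unfold c_def, rule sums_summable[OF egf_component_sums[OF assms]])
  have "diffs c = (\<lambda>m. a (Suc m) $ i $ j / fact m)"
    unfolding c_def by (rule diffs_divide_fact)
  then have "egf (\<lambda>m. a (Suc m)) t $ i $ j = (\<Sum>m. diffs c m * t ^ m)"
    by (simp only: egf_eq[OF geom_bounded_Suc[OF assms]])
  moreover have "(\<lambda>s. egf a s $ i $ j) = (\<lambda>s. \<Sum>m. c m * s ^ m)"
    by (simp only: egf_eq[OF assms] c_def)
  ultimately show ?thesis
    using deriv by (simp only:)
qed

section \<open>The matrix exponential\<close>

lemma mexp_eq_egf: "mexp (smul s C) = egf (mpow C) s"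
  unfolding mexp_def egf_def by (simp add: mpow_smul smul_smul)

lemma mexp_zero: "mexp (smul 0 C) = mat 1"
  by (simp add: mexp_eq_egf egf_zero)

lemma mexp_commute:
  assumes "A ** C = C ** A"
  shows "A ** mexp (smul s C) = mexp (smul s C) ** A"
  unfolding mexp_eq_egf using geom_bounded_mpow commute_mpow[OF assms] by (rule egf_commute)

lemma mexp_has_field_derivative:
  "((\<lambda>s. mexp (smul s C) $ i $ j) has_field_derivative (C ** mexp (smul t C)) $ i $ j) (at t)"
  using egf_has_field_derivative[OF geom_bounded_mpow, of C i j t]
  by (simp add: mexp_eq_egf egf_mult_left geom_bounded_mpow)

lemma mexp_neg_has_field_derivative:
  "((\<lambda>s. mexp (smul (- s) C) $ i $ j) has_field_derivative (- (C ** mexp (smul (- t) C))) $ i $ j) (at t)"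
  using DERIV_chain2[OF mexp_has_field_derivative DERIV_minus[OF DERIV_ident]] by simp

lemma mexp_mult_mexp_neg: "mexp (smul s C) ** mexp (smul (- s) C) = mat 1"
proof -
  have deriv: "((\<lambda>s. (mexp (smul s C) ** mexp (smul (- s) C)) $ i $ j) has_field_derivative 0) (at t)"
    for i j t
  proof -
    \<comment> \<open>the product rule terms cancel since \<open>mexp (smul t C)\<close> commutes with \<open>C\<close>\<close>
    have "mexp (smul t C) ** C = C ** mexp (smul t C)"
      using mexp_commute[of C C, OF refl] by simp
    then have cancel: "mexp (smul t C) ** - (C ** mexp (smul (- t) C))
        + C ** mexp (smul t C) ** mexp (smul (- t) C) = 0"
      by (simp add: matrix_mul_minus_right matrix_mul_assoc)
    have "((\<lambda>s. (mexp (smul s C) ** mexp (smul (- s) C)) $ i $ j) has_field_derivative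
        (mexp (smul t C) ** - (C ** mexp (smul (- t) C))
          + C ** mexp (smul t C) ** mexp (smul (- t) C)) $ i $ j) (at t)"
      by (rule matrix_mult_has_field_derivative[OF mexp_has_field_derivative mexp_neg_has_field_derivative])
    then show ?thesis
      unfolding cancel by simp
  qed
  have "(mexp (smul s C) ** mexp (smul (- s) C)) $ i $ j = (mexp (smul 0 C) ** mexp (smul (- 0) C)) $ i $ j"
    for i j
    using has_field_derivative_zero_constant[OF convex_UNIV deriv] by (metis UNIV_I)
  then show ?thesis by (simp add: vec_eq_iff mexp_zero)
qed

lemma invertible_mexp: "invertible (mexp (smul s C))"
  by (metis mexp_mult_mexp_neg invertible_right_inverse)

lemma matrix_mult_mexp_neg_has_field_derivative:
  "((\<lambda>s. (X ** mexp (smul (- s) C)) $ i $ j) has_field_derivative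
     - (X ** mexp (smul (- t) C) ** C) $ i $ j) (at t)"
proof -
  have const: "((\<lambda>s. X $ i $ j) has_field_derivative 0 $ i $ j) (at t)" for i j
    by simp
  have "X ** (C ** mexp (smul (- t) C)) = X ** mexp (smul (- t) C) ** C"
    using mexp_commute[of C C, OF refl] by (simp add: matrix_mul_assoc)
  moreover have "((\<lambda>s. (X ** mexp (smul (- s) C)) $ i $ j) has_field_derivative
      (X ** - (C ** mexp (smul (- t) C)) + 0 ** mexp (smul (- t) C)) $ i $ j) (at t)"
    by (rule matrix_mult_has_field_derivative[OF const mexp_neg_has_field_derivative])
  ultimately show ?thesis
    by (simp add: matrix_mul_minus_right)
qed

section \<open>The series \<open>Y\<^sup>-\<^sup>1(exp(-\<tau> Y\<^sup>k) - Id)\<close>\<close>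

lemma smul_power_minus: "smul (t ^ n / fact n) (smul ((-1) ^ n) A) = smul ((- t) ^ n / fact n) A"
proof -
  have "t ^ n / fact n * (-1) ^ n = (- t) ^ n / fact n"
    by (simp add: power_minus[of t])
  then show ?thesis by (simp only: smul_smul)
qed

lemma minus_smul: "- smul c A = smul (- c) A"
  by (simp add: vec_eq_iff)

definition phi_coeff :: "nat \<Rightarrow> complex^'n^'n \<Rightarrow> nat \<Rightarrow> complex^'n^'n" where
  "phi_coeff k Y m = (if m = 0 then 0 else smul ((-1) ^ m) (mpow Y (k * m - 1)))"

lemma phi_coeff_Suc: "phi_coeff k Y (Suc m) = smul ((-1) ^ Suc m) (mpow Y (k * Suc m - 1))"
  by (simp only: phi_coeff_def nat.distinct if_False)

lemma geom_bounded_phi_coeff: "geom_bounded (phi_coeff k Y)"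
proof -
  define R where "R = entry_l1_norm Y + 1"
  have R: "entry_l1_norm Y \<le> R" "1 \<le> R"
    using entry_l1_norm_nonneg[of Y] by (auto simp: R_def)
  have bound: "entry_l1_norm (phi_coeff k Y m) \<le> entry_l1_norm (mpow Y 0) * (R ^ k) ^ m" for m
  proof (cases "m = 0")
    case False
    have "entry_l1_norm (phi_coeff k Y m) = entry_l1_norm (mpow Y (k * m - 1))"
      using False by (simp add: phi_coeff_def entry_l1_norm_smul norm_power)
    also have "\<dots> \<le> entry_l1_norm (mpow Y 0) * entry_l1_norm Y ^ (k * m - 1)"
      by (rule entry_l1_norm_mpow)
    also have "\<dots> \<le> entry_l1_norm (mpow Y 0) * R ^ (k * m)"
      using R entry_l1_norm_nonneg
      by (intro mult_left_mono order_trans[OF power_mono power_increasing]) auto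
    finally show ?thesis by (simp add: power_mult)
  qed (simp add: phi_coeff_def entry_l1_norm_nonneg)
  then show ?thesis
    unfolding geom_bounded_def by (intro exI allI) (rule bound)
qed

lemma phiser_eq_egf: "phiser k \<tau> Y = egf (phi_coeff k Y) \<tau>"
proof -
  have "egf (phi_coeff k Y) \<tau>
      = phi_coeff k Y 0 + (\<Sum>m. smul (\<tau> ^ Suc m / fact (Suc m)) (phi_coeff k Y (Suc m)))"
    by (rule egf_split_head[OF geom_bounded_phi_coeff])
  also have "\<dots> = phiser k \<tau> Y"
    by (simp only: phiser_def phi_coeff_Suc smul_power_minus) (simp add: phi_coeff_def)
  finally show ?thesis ..
qed

lemma phiser_zero: "phiser k 0 Y = 0"
  by (simp add: phiser_eq_egf egf_zero phi_coeff_def)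

lemma mult_phi_coeff_Suc:
  assumes "1 \<le> k"
  shows "Y ** phi_coeff k Y (Suc m) = smul ((-1) ^ Suc m) (mpow (mpow Y k) (Suc m))"
proof -
  have "Suc (k * Suc m - 1) = k * Suc m" using assms by (cases k) auto
  then have "Y ** mpow Y (k * Suc m - 1) = mpow Y (k * Suc m)"
    by (metis mpow.simps(2))
  then show ?thesis by (simp only: phi_coeff_Suc smul_mult_right mpow_mult)
qed

lemma phi_coeff_Suc_mult_mpow:
  assumes "1 \<le> k"
  shows "phi_coeff k Y (Suc m) ** (- mpow Y k) = phi_coeff k Y (Suc (Suc m))"
proof -
  have "k * Suc m - 1 + k = k * Suc (Suc m) - 1" using assms by (cases k) auto
  then have "mpow Y (k * Suc m - 1) ** mpow Y k = mpow Y (k * Suc (Suc m) - 1)"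
    by (metis mpow_add)
  then show ?thesis
    by (simp only: phi_coeff_Suc matrix_mul_minus_right smul_mult_left minus_smul power_Suc
        mult_minus1)
qed

lemma mult_phiser:
  assumes "1 \<le> k"
  shows "Y ** phiser k \<tau> Y = mexp (smul (- \<tau>) (mpow Y k)) - mat 1"
proof -
  have "Y ** phiser k \<tau> Y = egf (\<lambda>m. Y ** phi_coeff k Y m) \<tau>"
    by (simp only: phiser_eq_egf egf_mult_left[OF geom_bounded_phi_coeff])
  also have "\<dots> = Y ** phi_coeff k Y 0
      + (\<Sum>m. smul (\<tau> ^ Suc m / fact (Suc m)) (Y ** phi_coeff k Y (Suc m)))"
    by (rule egf_split_head[OF geom_bounded_mult_left[OF geom_bounded_phi_coeff]])
  also have "\<dots> = (\<Sum>m. smul ((- \<tau>) ^ Suc m / fact (Suc m)) (mpow (mpow Y k) (Suc m)))"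
    by (simp only: mult_phi_coeff_Suc[OF assms] smul_power_minus) (simp add: phi_coeff_def)
  also have "\<dots> = egf (mpow (mpow Y k)) (- \<tau>) - mat 1"
    using egf_split_head[OF geom_bounded_mpow, of "mpow Y k" "- \<tau>"] by simp
  finally show ?thesis by (simp only: mexp_eq_egf)
qed

lemma phiser_commute: "Y ** phiser k \<tau> Y = phiser k \<tau> Y ** Y"
  unfolding phiser_eq_egf using geom_bounded_phi_coeff
proof (rule egf_commute)
  show "Y ** phi_coeff k Y m = phi_coeff k Y m ** Y" for m
    using commute_mpow[of Y Y, OF refl] by (simp add: phi_coeff_def smul_mult_left smul_mult_right)
qed

lemma phiser_has_field_derivative:
  assumes "1 \<le> k"
  shows "((\<lambda>s. phiser k s Y $ i $ j) has_field_derivative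
     (- (phiser k \<tau> Y ** mpow Y k) - mpow Y (k - 1)) $ i $ j) (at \<tau>)"
proof -
  have first: "phi_coeff k Y (Suc 0) = - mpow Y (k - 1)"
    by (simp add: phi_coeff_def vec_eq_iff)
  have zeroth: "phi_coeff k Y 0 ** (- mpow Y k) = 0"
    by (simp add: phi_coeff_def)
  have "egf (\<lambda>m. phi_coeff k Y (Suc m)) \<tau> = phi_coeff k Y (Suc 0)
      + (\<Sum>m. smul (\<tau> ^ Suc m / fact (Suc m)) (phi_coeff k Y (Suc (Suc m))))"
    by (rule egf_split_head[OF geom_bounded_Suc[OF geom_bounded_phi_coeff]])
  also have "\<dots> = - mpow Y (k - 1) + (phi_coeff k Y 0 ** (- mpow Y k)
      + (\<Sum>m. smul (\<tau> ^ Suc m / fact (Suc m)) (phi_coeff k Y (Suc m) ** (- mpow Y k))))"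
    by (simp only: phi_coeff_Suc_mult_mpow[OF assms] first zeroth add_0_left)
  also have "\<dots> = - mpow Y (k - 1) + phiser k \<tau> Y ** (- mpow Y k)"
    by (simp only: phiser_eq_egf egf_mult_right[OF geom_bounded_phi_coeff]
        egf_split_head[OF geom_bounded_mult_right[OF geom_bounded_phi_coeff]])
  finally have "egf (\<lambda>m. phi_coeff k Y (Suc m)) \<tau> = - (phiser k \<tau> Y ** mpow Y k) - mpow Y (k - 1)"
    by (simp add: matrix_mul_minus_right)
  then show ?thesis
    using egf_has_field_derivative[OF geom_bounded_phi_coeff, of k Y i j \<tau>]
    by (simp only: phiser_eq_egf)
qed

section \<open>The Hamiltonian vector field of \<open>tr U\<^sup>k / k\<close>\<close>

lemma kd_mult: "kd a b * x = (if a = b then x else 0)"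
  by (simp add: kd_def)

lemma mult_kd: "x * kd a b = (if a = b then x else 0)"
  by (simp add: kd_def)

lemma mult_if_zero: "x * (if c then y else 0) = (if c then x * y else (0::'a::mult_zero))"
  by simp

lemma sum_if_zero: "(\<Sum>b\<in>S. if c then f b else 0) = (if c then \<Sum>b\<in>S. f b else 0)"
  by simp

text \<open>Contractions \<open>\<Sum>\<^sub>a\<^sub>,\<^sub>b P\<^sub>b\<^sub>a (\<dots>)\<close> of the index patterns occurring in the
  brackets \<open>{U\<^sub>a\<^sub>b, -}\<close>.\<close>

lemma pairing_kd_kd:
  fixes P :: "complex^'n^'n"
  shows "(\<Sum>a\<in>UNIV. \<Sum>b\<in>UNIV. P $ b $ a * (kd a j * kd i b)) = P $ i $ j"
  by (simp add: kd_mult mult_kd mult_if_zero sum_if_zero sum.delta sum.delta')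

lemma pairing_entry_kd:
  fixes P :: "complex^'n^'n"
  shows "(\<Sum>a\<in>UNIV. \<Sum>b\<in>UNIV. P $ b $ a * (M $ a $ j * kd i b)) = (P ** M) $ i $ j"
  by (simp add: mult_kd mult_if_zero sum_if_zero sum.delta sum.delta' matrix_matrix_mult_def)

lemma pairing_kd_entry:
  fixes P :: "complex^'n^'n"
  shows "(\<Sum>a\<in>UNIV. \<Sum>b\<in>UNIV. P $ b $ a * (kd a j * M $ i $ b)) = (M ** P) $ i $ j"
  by (simp add: kd_mult mult_if_zero sum_if_zero sum.delta sum.delta' matrix_matrix_mult_def
      mult.commute)

lemma pairing_entry_entry:
  fixes P :: "complex^'n^'n"
  shows "(\<Sum>a\<in>UNIV. \<Sum>b\<in>UNIV. P $ b $ a * (M $ a $ j * N $ i $ b)) = (N ** (P ** M)) $ i $ j"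
proof -
  have "(N ** (P ** M)) $ i $ j = (\<Sum>b\<in>UNIV. \<Sum>a\<in>UNIV. N $ i $ b * (P $ b $ a * M $ a $ j))"
    by (simp add: matrix_matrix_mult_def sum_distrib_left)
  also have "\<dots> = (\<Sum>a\<in>UNIV. \<Sum>b\<in>UNIV. N $ i $ b * (P $ b $ a * M $ a $ j))"
    by (rule sum.swap)
  also have "\<dots> = (\<Sum>a\<in>UNIV. \<Sum>b\<in>UNIV. P $ b $ a * (M $ a $ j * N $ i $ b))"
    by (intro sum.cong refl) (simp add: mult_ac)
  finally show ?thesis by (rule sym)
qed

lemma pairing_kd_vec:
  fixes P :: "complex^'n^'n"
  shows "(\<Sum>a\<in>UNIV. \<Sum>b\<in>UNIV. P $ b $ a * (kd c b * w $ a)) = (P *v w) $ c"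
  by (simp add: kd_mult mult_if_zero sum_if_zero sum.delta sum.delta' matrix_vector_mult_def)

lemma pairing_entry_vec:
  fixes P :: "complex^'n^'n"
  shows "(\<Sum>a\<in>UNIV. \<Sum>b\<in>UNIV. P $ b $ a * (M $ c $ b * w $ a)) = ((M ** P) *v w) $ c"
  by (simp add: matrix_vector_mult_def matrix_matrix_mult_def sum_distrib_left sum_distrib_right
      mult_ac)

lemma pairing_vec_kd:
  fixes P :: "complex^'n^'n"
  shows "(\<Sum>a\<in>UNIV. \<Sum>b\<in>UNIV. P $ b $ a * (v $ b * kd a l)) = (v v* P) $ l"
  by (simp add: kd_mult mult_kd mult_if_zero sum_if_zero sum.delta sum.delta' vector_matrix_mult_def
      mult.commute)

lemma pairing_vec_entry:
  fixes P :: "complex^'n^'n"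
  shows "(\<Sum>a\<in>UNIV. \<Sum>b\<in>UNIV. P $ b $ a * (v $ b * M $ a $ l)) = (v v* (P ** M)) $ l"
proof -
  have "(v v* (P ** M)) $ l = (\<Sum>b\<in>UNIV. \<Sum>a\<in>UNIV. v $ b * (P $ b $ a * M $ a $ l))"
    by (simp add: vector_matrix_mult_def matrix_matrix_mult_def sum_distrib_left)
  also have "\<dots> = (\<Sum>a\<in>UNIV. \<Sum>b\<in>UNIV. v $ b * (P $ b $ a * M $ a $ l))"
    by (rule sum.swap)
  also have "\<dots> = (\<Sum>a\<in>UNIV. \<Sum>b\<in>UNIV. P $ b $ a * (v $ b * M $ a $ l))"
    by (intro sum.cong refl) (simp add: mult_ac)
  finally show ?thesis by (rule sym)
qed

lemma ham_trpow_CX: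
  fixes X U :: "complex^'n::finite^'n"
  assumes "1 \<le> k"
  shows "ham_trpow c0 k (X, U, V, W) (CX i j) = - (X ** mpow U k) $ i $ j - c0 * mpow U (k - 1) $ i $ j"
proof -
  define P where "P = mpow U (k - 1)"
  have expand: "P $ b $ a * brXU c0 X U i j a b = c0 * (P $ b $ a * (kd a j * kd i b))
      + 1/2 * (P $ b $ a * ((U ** X) $ a $ j * kd i b) + P $ b $ a * (kd a j * (X ** U) $ i $ b)
        + P $ b $ a * (U $ a $ j * X $ i $ b) - P $ b $ a * (X $ a $ j * U $ i $ b))" for a b
    by (simp add: brXU_def algebra_simps)
  have "ham_trpow c0 k (X, U, V, W) (CX i j) = - (\<Sum>a\<in>UNIV. \<Sum>b\<in>UNIV. P $ b $ a * brXU c0 X U i j a b)"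
    by (simp add: ham_trpow_def P_def sum_negf)
  also have "\<dots> = - (c0 * P $ i $ j + 1/2 * ((P ** (U ** X)) $ i $ j + ((X ** U) ** P) $ i $ j
      + (X ** (P ** U)) $ i $ j - (U ** (P ** X)) $ i $ j))"
    by (simp only: expand sum.distrib sum_subtractf pairing_kd_kd pairing_entry_kd pairing_kd_entry
        pairing_entry_entry flip: sum_distrib_left)
  also have "\<dots> = - (X ** mpow U k) $ i $ j - c0 * mpow U (k - 1) $ i $ j"
  proof -
    note UP = mpow_diff_one[OF assms, of U, folded P_def]
    have "P ** (U ** X) = mpow U k ** X" "U ** (P ** X) = mpow U k ** X"
      by (simp_all only: matrix_mul_assoc UP)
    moreover have "(X ** U) ** P = X ** mpow U k" "X ** (P ** U) = X ** mpow U k"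
      by (simp_all only: UP flip: matrix_mul_assoc)
    ultimately show ?thesis by (simp add: P_def algebra_simps)
  qed
  finally show ?thesis .
qed

lemma ham_trpow_CU: "ham_trpow c0 k (X, U, V, W) (CU i j) = 0"
proof -
  define P where "P = mpow U (k - 1)"
  have "ham_trpow c0 k (X, U, V, W) (CU i j) = (\<Sum>a\<in>UNIV. \<Sum>b\<in>UNIV.
      1/2 * (P $ b $ a * ((U ** U) $ a $ j * kd i b) - P $ b $ a * (kd a j * (U ** U) $ i $ b)))"
    by (simp add: ham_trpow_def P_def algebra_simps)
  also have "\<dots> = 1/2 * ((P ** (U ** U)) $ i $ j - ((U ** U) ** P) $ i $ j)"
    by (simp only: sum_subtractf pairing_entry_kd pairing_kd_entry flip: sum_distrib_left)
  also have "\<dots> = 0"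
    using commute_mpow[of "U ** U" U "k - 1"] by (simp add: P_def matrix_mul_assoc)
  finally show ?thesis .
qed

lemma ham_trpow_CW: "ham_trpow c0 k (X, U, V, W) (CW \<alpha> c) = 0"
proof -
  define P where "P = mpow U (k - 1)"
  have "ham_trpow c0 k (X, U, V, W) (CW \<alpha> c) = (\<Sum>a\<in>UNIV. \<Sum>b\<in>UNIV.
      1/2 * (P $ b $ a * (kd c b * (U *v W \<alpha>) $ a) - P $ b $ a * (U $ c $ b * W \<alpha> $ a)))"
    by (simp add: ham_trpow_def P_def brMW_def algebra_simps)
  also have "\<dots> = 1/2 * ((P *v (U *v W \<alpha>)) $ c - ((U ** P) *v W \<alpha>) $ c)"
    by (simp only: sum_subtractf pairing_kd_vec pairing_entry_vec flip: sum_distrib_left)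
  also have "\<dots> = 0"
    using commute_mpow[of U U "k - 1", OF refl] by (simp add: P_def matrix_vector_mul_assoc)
  finally show ?thesis .
qed

lemma ham_trpow_CV: "ham_trpow c0 k (X, U, V, W) (CV \<alpha> l) = 0"
proof -
  define P where "P = mpow U (k - 1)"
  have "ham_trpow c0 k (X, U, V, W) (CV \<alpha> l) = (\<Sum>a\<in>UNIV. \<Sum>b\<in>UNIV.
      1/2 * (P $ b $ a * ((V \<alpha> v* U) $ b * kd a l) - P $ b $ a * (V \<alpha> $ b * U $ a $ l)))"
    by (simp add: ham_trpow_def P_def brMV_def algebra_simps)
  also have "\<dots> = 1/2 * (((V \<alpha> v* U) v* P) $ l - (V \<alpha> v* (P ** U)) $ l)"
    by (simp only: sum_subtractf pairing_vec_kd pairing_vec_entry flip: sum_distrib_left)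
  also have "\<dots> = 0"
    using commute_mpow[of U U "k - 1", OF refl] by (simp add: P_def vector_matrix_mul_assoc)
  finally show ?thesis .
qed

section \<open>The flows\<close>

lemma MX_flow_mem:
  assumes "(X, Z, V, W) \<in> MX d q"
  shows "(X ** mexp (smul (- t) (mpow Z k)), Z, V, W) \<in> MX d q"
proof -
  define E where "E = mexp (smul (- t) (mpow Z k))"
  have "Z ** E = E ** Z"
    unfolding E_def by (rule mexp_commute[OF commute_mpow[OF refl]])
  then have "X ** E ** Z = X ** Z ** E"
    by (simp flip: matrix_mul_assoc)
  moreover have invX: "invertible X"
    using assms by (simp add: MX_def)
  ultimately have "X ** E ** Z ** matrix_inv (X ** E) = X ** Z ** matrix_inv X"
    unfolding E_def using matrix_mult_inv_cancel[OF _ invertible_mexp] by simp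
  then show ?thesis
    using assms invertible_mult[OF invX invertible_mexp] by (simp add: MX_def E_def)
qed

lemma MY_flow_mem:
  assumes "1 \<le> k" and "(X, Y, V, W) \<in> MY d q"
  shows "(X ** mexp (smul (- \<tau>) (mpow Y k)) + phiser k \<tau> Y, Y, V, W) \<in> MY d q"
proof -
  define E where "E = mexp (smul (- \<tau>) (mpow Y k))"
  define X' where "X' = X ** E + phiser k \<tau> Y"
  have YE: "Y ** E = E ** Y"
    unfolding E_def by (rule mexp_commute[OF commute_mpow[OF refl]])
  have Yphi: "Y ** phiser k \<tau> Y = E - mat 1" "phiser k \<tau> Y ** Y = E - mat 1"
    using mult_phiser[OF assms(1), of Y \<tau>] phiser_commute[of Y k \<tau>] by (simp_all add: E_def)
  have XY: "mat 1 + X' ** Y = (mat 1 + X ** Y) ** E"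
    by (simp add: X'_def matrix_add_rdistrib Yphi YE flip: matrix_mul_assoc)
  have YX: "mat 1 + Y ** X' = (mat 1 + Y ** X) ** E"
    by (simp add: X'_def matrix_add_ldistrib matrix_add_rdistrib Yphi matrix_mul_assoc)
  have inv: "invertible (mat 1 + X ** Y)" "invertible (mat 1 + Y ** X)"
    using assms(2) by (simp_all add: MY_def)
  have "(mat 1 + X' ** Y) ** matrix_inv (mat 1 + Y ** X')
      = (mat 1 + X ** Y) ** matrix_inv (mat 1 + Y ** X)"
    unfolding XY YX E_def by (rule matrix_mult_inv_cancel[OF inv(2) invertible_mexp])
  moreover have "invertible (mat 1 + X' ** Y)" "invertible (mat 1 + Y ** X')"
    unfolding XY YX E_def by (simp_all add: inv invertible_mult invertible_mexp)
  ultimately show ?thesis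
    using assms(2) unfolding X'_def[symmetric] E_def[symmetric] by (simp add: MY_def)
qed

lemma trZ_flow_hamiltonian:
  assumes "1 \<le> k"
  shows "((\<lambda>s. cval (X ** mexp (smul (- s) (mpow Z k)), Z, V, W) c) has_field_derivative
      ham_trpow 0 k (X ** mexp (smul (- t) (mpow Z k)), Z, V, W) c) (at t)"
proof (cases c)
  case (CX i j)
  then show ?thesis
    using matrix_mult_mexp_neg_has_field_derivative[of X "mpow Z k" i j t]
    by (simp add: ham_trpow_CX[OF assms])
qed (simp_all add: ham_trpow_CU ham_trpow_CV ham_trpow_CW)

lemma trY_flow_hamiltonian:
  assumes "1 \<le> k"
  shows "((\<lambda>s. cval (X ** mexp (smul (- s) (mpow Y k)) + phiser k s Y, Y, V, W) c) has_field_derivative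
      ham_trpow 1 k (X ** mexp (smul (- \<tau>) (mpow Y k)) + phiser k \<tau> Y, Y, V, W) c) (at \<tau>)"
proof (cases c)
  case (CX i j)
  have "((\<lambda>s. (X ** mexp (smul (- s) (mpow Y k))) $ i $ j + phiser k s Y $ i $ j) has_field_derivative
      - (X ** mexp (smul (- \<tau>) (mpow Y k)) ** mpow Y k) $ i $ j
      + (- (phiser k \<tau> Y ** mpow Y k) - mpow Y (k - 1)) $ i $ j) (at \<tau>)"
    by (intro DERIV_add matrix_mult_mexp_neg_has_field_derivative phiser_has_field_derivative[OF assms])
  moreover have "ham_trpow 1 k (X ** mexp (smul (- \<tau>) (mpow Y k)) + phiser k \<tau> Y, Y, V, W) c
      = - (X ** mexp (smul (- \<tau>) (mpow Y k)) ** mpow Y k) $ i $ j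
        + (- (phiser k \<tau> Y ** mpow Y k) - mpow Y (k - 1)) $ i $ j"
    by (simp add: CX ham_trpow_CX[OF assms] matrix_add_rdistrib)
  ultimately show ?thesis
    by (simp add: CX)
qed (simp_all add: ham_trpow_CU ham_trpow_CV ham_trpow_CW)

text \<open>The hypotheses on \<open>d\<close> and \<open>q\<close> are only needed for the smoothness of the
  quotients, not for the flows.\<close>

theorem mainTheorem14:
  fixes d k :: nat and q :: complex
  assumes "d \<ge> 1" and "q \<noteq> 0" and "\<forall>m::nat. m > 0 \<longrightarrow> q ^ m \<noteq> 1" and "k \<ge> 1"
  shows
    "(\<forall>(X::complex^'n::finite^'n) Z V W. (X, Z, V, W) \<in> MX d q \<longrightarrow>
        (let \<gamma> = (\<lambda>t::complex. (X ** mexp (smul (- t) (mpow Z k)), Z, V, W)) in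
          \<gamma> 0 = (X, Z, V, W) \<and>
          (\<forall>t. \<gamma> t \<in> MX d q) \<and>
          (\<forall>t c. valid_coord d c \<longrightarrow>
             ((\<lambda>s. cval (\<gamma> s) c) has_field_derivative ham_trpow 0 k (\<gamma> t) c) (at t))))
   \<and>
    (\<forall>(X::complex^'n::finite^'n) Y V W. (X, Y, V, W) \<in> MY d q \<longrightarrow>
        (let \<gamma> = (\<lambda>\<tau>::complex. (X ** mexp (smul (- \<tau>) (mpow Y k)) + phiser k \<tau> Y, Y, V, W)) in
          \<gamma> 0 = (X, Y, V, W) \<and>
          (\<forall>\<tau>. \<gamma> \<tau> \<in> MY d q) \<and>
          (\<forall>\<tau> c. valid_coord d c \<longrightarrow>
             ((\<lambda>s. cval (\<gamma> s) c) has_field_derivative ham_trpow 1 k (\<gamma> \<tau>) c) (at \<tau>))))"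
  using MX_flow_mem MY_flow_mem[OF \<open>k \<ge> 1\<close>]
    trZ_flow_hamiltonian[OF \<open>k \<ge> 1\<close>] trY_flow_hamiltonian[OF \<open>k \<ge> 1\<close>]
  by (auto simp: Let_def mexp_zero phiser_zero)

end
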